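(* Let $G=(V,E)$ be a computation graph whose vertices $v$ carry local types $\mathcal T_v$, and such that for each non-source vertex $v$ the associated function $f_v:\prod_{(u,v)\in E}\mathcal T_u\to\mathcal T_v$ is representable in $\mathrm{ResMLP}(d_v,L_v)$; for a source vertex $v$ put $d_v=d_{\mathcal T_v}$ and $L_v=0$. Then the function induced by $G$, from the product of the types of the source vertices to the product of the types of the sink vertices, is representable in $\mathrm{ResMLP}\big(\sum_{v\in V}d_v,\ \mathrm{depth}(G)\,(\max_{v\in V}L_v+1)+1\big)$.
   Context: A local type $\mathcal T$ is a finite set $S$ with an injective encoding $\phi_{\mathcal T}:S\to\mathbb{R}^{d_{\mathcal T}}$; product types are encoded by concatenation. A computation graph is a finite directed acyclic graph $G=(V,E)$ where each vertex $v$ has a local type $\mathcal T_v$ and each vertex with at least one incoming edge has a function $f_v$ from the product (in a fixed order) of the types of its in-neighbours to $\mathcal T_v$. Source vertices have no incoming edges, sink vertices no outgoing edges. The induced function assigns the inputs to the sources and, once all in-neighbours of $v$ have values $x_{u}$, assigns $v$ the value $f_v((x_u)_u)$; its output is the tuple of values at the sinks. $\mathrm{depth}(G)$ is the number of edges of a longest directed path in $G$. A single-layer fully connected network of dimension $d$ is $f_{\mathrm{fcn}}(X)=W_2\,\mathrm{ReLU}(W_1X+B_1)+B_2$ with $W_1\in\mathbb{R}^{4d\times d}$, $B_1\in\mathbb{R}^{4d}$, $W_2\in\mathbb{R}^{d\times 4d}$, $B_2\in\mathbb{R}^d$. $\mathrm{ResMLP}(d,L)$ is the set of maps $X\mapsto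 X^{(L)}$ with $X^{(0)}=X$, $X^{(l)}=X^{(l-1)}+f^{(l)}_{\mathrm{fcn}}(X^{(l-1)})$. A function $f:\mathcal A\to\mathcal B$ between local types is representable in $\mathrm{ResMLP}(d,L)$ (with $d\ge\max(d_{\mathcal A},d_{\mathcal B})$) if there is $\tilde f\in\mathrm{ResMLP}(d,L)$ with $\iota_1\circ\phi_{\mathcal B}\circ f=\tilde f\circ\iota_2\circ\phi_{\mathcal A}$, where $\iota_1,\iota_2$ pad with zeros into $\mathbb{R}^d$. *)

theory Defs
  imports Main Complex_Main
begin

text \<open>A vector in R^d is a real list of length d.  A matrix in R^(m x n) is
  given by its entries W i j for i < m, j < n (entries outside are irrelevant).\<close>

type_synonym fcn_params = "(nat \<Rightarrow> nat \<Rightarrow> real) \<times> (nat \<Rightarrow> real) \<times> (nat \<Rightarrow> nat \<Rightarrow> real) \<times> (nat \<Rightarrow> real)"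

definition relu :: "real \<Rightarrow> real" where
  "relu x = max 0 x"

definition fcn :: "nat \<Rightarrow> fcn_params \<Rightarrow> real list \<Rightarrow> real list" where
  "fcn d p X = (case p of (W1, B1, W2, B2) \<Rightarrow>
     map (\<lambda>i. (\<Sum>k<4*d. W2 i k * relu ((\<Sum>j<d. W1 k j * X ! j) + B1 k)) + B2 i) [0..<d])"

definition res_layer :: "nat \<Rightarrow> fcn_params \<Rightarrow> real list \<Rightarrow> real list" where
  "res_layer d p X = map (\<lambda>i. X ! i + fcn d p X ! i) [0..<d]"

definition resmlp_apply :: "nat \<Rightarrow> fcn_params list \<Rightarrow> real list \<Rightarrow> real list" where
  "resmlp_apply d ps X = fold (res_layer d) ps X"

definition ResMLP :: "nat \<Rightarrow> nat \<Rightarrow> (real list \<Rightarrow> real list) set" where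
  "ResMLP d L = {resmlp_apply d ps | ps. length ps = L}"

definition pad :: "nat \<Rightarrow> real list \<Rightarrow> real list" where
  "pad d x = x @ replicate (d - length x) 0"

definition local_type :: "'a set \<Rightarrow> ('a \<Rightarrow> real list) \<Rightarrow> nat \<Rightarrow> bool" where
  "local_type S enc dm \<longleftrightarrow> finite S \<and> inj_on enc S \<and> (\<forall>x\<in>S. length (enc x) = dm)"

definition prod_set :: "('v \<Rightarrow> 'a set) \<Rightarrow> 'v list \<Rightarrow> 'a list set" where
  "prod_set S us = {xs. length xs = length us \<and> (\<forall>i<length us. xs ! i \<in> S (us ! i))}"

definition prod_enc :: "('v \<Rightarrow> 'a \<Rightarrow> real list) \<Rightarrow> 'v list \<Rightarrow> 'a list \<Rightarrow> real list" where
  "prod_enc enc us xs = concat (map (\<lambda>(u, x). enc u x) (zip us xs))"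

definition prod_dim :: "('v \<Rightarrow> nat) \<Rightarrow> 'v list \<Rightarrow> nat" where
  "prod_dim dm us = sum_list (map dm us)"

definition representable ::
  "nat \<Rightarrow> nat \<Rightarrow> 'a set \<Rightarrow> ('a \<Rightarrow> real list) \<Rightarrow> nat \<Rightarrow> ('b \<Rightarrow> real list) \<Rightarrow> nat
    \<Rightarrow> ('a \<Rightarrow> 'b) \<Rightarrow> bool" where
  "representable d L A encA da encB dB f \<longleftrightarrow>
     max da dB \<le> d \<and>
     (\<exists>F\<in>ResMLP d L. \<forall>x\<in>A. pad d (encB (f x)) = F (pad d (encA x)))"

definition is_source :: "('v \<times> 'v) set \<Rightarrow> 'v \<Rightarrow> bool" where
  "is_source E v \<longleftrightarrow> (\<forall>u. (u, v) \<notin> E)"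

definition is_sink :: "('v \<times> 'v) set \<Rightarrow> 'v \<Rightarrow> bool" where
  "is_sink E v \<longleftrightarrow> (\<forall>w. (v, w) \<notin> E)"

text \<open>Computation graph: finite DAG with vertex set V, in-neighbour lists ins
  (the fixed order of the arguments of f_v), local types (S v, enc v, dm v),
  and functions f v from the product of in-neighbour types to the type of v.\<close>
definition comp_graph ::
  "'v set \<Rightarrow> ('v \<times> 'v) set \<Rightarrow> ('v \<Rightarrow> 'v list) \<Rightarrow> ('v \<Rightarrow> 'a set) \<Rightarrow> ('v \<Rightarrow> 'a \<Rightarrow> real list)
    \<Rightarrow> ('v \<Rightarrow> nat) \<Rightarrow> ('v \<Rightarrow> 'a list \<Rightarrow> 'a) \<Rightarrow> bool" where
  "comp_graph V E ins S enc dm f \<longleftrightarrow>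
     finite V \<and> E \<subseteq> V \<times> V \<and> acyclic E \<and>
     (\<forall>v\<in>V. local_type (S v) (enc v) (dm v)) \<and>
     (\<forall>v\<in>V. distinct (ins v) \<and> set (ins v) = {u. (u, v) \<in> E}) \<and>
     (\<forall>v\<in>V. \<not> is_source E v \<longrightarrow> (\<forall>xs\<in>prod_set S (ins v). f v xs \<in> S v))"

text \<open>Evaluation: sources get their input value; after n rounds every vertex
  whose longest incoming path has length \<le> n carries its correct value.\<close>
primrec eval_graph ::
  "('v \<times> 'v) set \<Rightarrow> ('v \<Rightarrow> 'v list) \<Rightarrow> ('v \<Rightarrow> 'a list \<Rightarrow> 'a) \<Rightarrow> ('v \<Rightarrow> 'a) \<Rightarrow> nat \<Rightarrow> 'v \<Rightarrow> 'a" where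
  "eval_graph E ins f inp 0 v = inp v"
| "eval_graph E ins f inp (Suc n) v =
     (if is_source E v then inp v else f v (map (eval_graph E ins f inp n) (ins v)))"

definition induced ::
  "'v set \<Rightarrow> ('v \<times> 'v) set \<Rightarrow> ('v \<Rightarrow> 'v list) \<Rightarrow> ('v \<Rightarrow> 'a list \<Rightarrow> 'a) \<Rightarrow> 'v list \<Rightarrow> 'v list
    \<Rightarrow> 'a list \<Rightarrow> 'a list" where
  "induced V E ins f srcs snks xs =
     map (eval_graph E ins f (\<lambda>v. the (map_of (zip srcs xs) v)) (card V)) snks"

definition is_path :: "('v \<times> 'v) set \<Rightarrow> 'v list \<Rightarrow> bool" where
  "is_path E p \<longleftrightarrow> p \<noteq> [] \<and> (\<forall>i. Suc i < length p \<longrightarrow> (p ! i, p ! Suc i) \<in> E)"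

definition depth :: "('v \<times> 'v) set \<Rightarrow> nat" where
  "depth E = Max {length p - 1 | p. is_path E p}"

end

theory Submission
  imports Defs
begin

text \<open>Every vertex \<open>v\<close> gets its own block of \<open>d\<^sub>v\<close> coordinates, and vertices are computed
  level by level, the level of \<open>v\<close> being the length of a longest path ending in \<open>v\<close>: sources have
  level 0, and in-neighbours have smaller level than the vertex. Stage \<open>l\<close> is one residual layer
  that copies the encodings of the in-neighbours of each vertex of level \<open>l\<close> into the block of
  that vertex, followed by \<open>max L\<^sub>v\<close> layers that run the networks of all level-\<open>l\<close> vertices in
  parallel, each on its own block and padded with identity layers, while all other blocks stay
  unchanged. After \<open>depth(G)\<close> stages every block holds the encoded value of its vertex, and a
  last copying layer collects the encodings of the sinks.\<close>

section \<open>Residual layers built from neurons\<close>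

lemma sum_list_concat: "sum_list (concat xss) = sum_list (map sum_list xss)"
  by (induction xss) auto

lemma length_res_layer [simp]: "length (res_layer d p X) = d"
  by (simp add: res_layer_def)

lemma length_resmlp_apply: "length X = d \<Longrightarrow> length (resmlp_apply d ps X) = d"
  unfolding resmlp_apply_def by (induction ps arbitrary: X) auto

lemma resmlp_apply_append: "resmlp_apply d (ps @ qs) = resmlp_apply d qs \<circ> resmlp_apply d ps"
  by (simp add: resmlp_apply_def fun_eq_iff)

definition zero_fcn :: fcn_params where
  "zero_fcn = (\<lambda>_ _. 0, \<lambda>_. 0, \<lambda>_ _. 0, \<lambda>_. 0)"

lemma res_layer_zero_fcn: "length X = d \<Longrightarrow> res_layer d zero_fcn X = X"
  by (intro nth_equalityI) (simp_all add: res_layer_def fcn_def zero_fcn_def)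

lemma resmlp_apply_zero_fcns: "length X = d \<Longrightarrow> resmlp_apply d (replicate k zero_fcn) X = X"
  unfolding resmlp_apply_def by (induction k) (simp_all add: res_layer_zero_fcn)

text \<open>A hidden neuron \<open>(w, b, c)\<close> contributes \<open>c i * relu (w \<bullet> X + b)\<close> to output coordinate \<open>i\<close>;
  a layer of dimension \<open>d\<close> has room for \<open>4 * d\<close> of them.\<close>

type_synonym neuron = "(nat \<Rightarrow> real) \<times> real \<times> (nat \<Rightarrow> real)"

fun neuron_out :: "nat \<Rightarrow> real list \<Rightarrow> neuron \<Rightarrow> nat \<Rightarrow> real" where
  "neuron_out d X (w, b, c) i = c i * relu ((\<Sum>j<d. w j * X ! j) + b)"

definition neurons_layer :: "neuron list \<Rightarrow> (nat \<Rightarrow> real) \<Rightarrow> fcn_params" where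
  "neurons_layer us B2 =
     (\<lambda>k j. if k < length us then fst (us ! k) j else 0,
      \<lambda>k. if k < length us then fst (snd (us ! k)) else 0,
      \<lambda>i k. if k < length us then snd (snd (us ! k)) i else 0, B2)"

lemma res_layer_neurons_layer:
  assumes "length us \<le> 4 * d" "length X = d"
  shows "res_layer d (neurons_layer us B2) X =
           map (\<lambda>i. X ! i + (\<Sum>u\<leftarrow>us. neuron_out d X u i) + B2 i) [0..<d]"
proof (rule nth_equalityI)
  fix i assume "i < length (res_layer d (neurons_layer us B2) X)"
  then have i: "i < d" by simp
  have neuron_out_sel: "neuron_out d X u i = snd (snd u) i * relu ((\<Sum>j<d. fst u j * X ! j) + fst (snd u))"
    for u by (cases u) simp
  have "(\<Sum>k<4*d. (if k < length us then snd (snd (us ! k)) i else 0) *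
          relu ((\<Sum>j<d. (if k < length us then fst (us ! k) j else 0) * X ! j) +
                (if k < length us then fst (snd (us ! k)) else 0)))
        = (\<Sum>k<length us. neuron_out d X (us ! k) i)"
    by (rule sum.mono_neutral_cong_right) (use assms neuron_out_sel in auto)
  also have "\<dots> = (\<Sum>u\<leftarrow>us. neuron_out d X u i)"
    by (simp add: sum_list_sum_nth atLeast0LessThan)
  finally show "res_layer d (neurons_layer us B2) X ! i =
      map (\<lambda>i. X ! i + (\<Sum>u\<leftarrow>us. neuron_out d X u i) + B2 i) [0..<d] ! i"
    using i unfolding res_layer_def fcn_def neurons_layer_def
    by (simp only: nth_map_upt split: prod.split) simp
qed simp

lemma nth_res_layer_neurons_layer:
  "length us \<le> 4 * d \<Longrightarrow> length X = d \<Longrightarrow> c < d \<Longrightarrow>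
     res_layer d (neurons_layer us B2) X ! c = X ! c + (\<Sum>u\<leftarrow>us. neuron_out d X u c) + B2 c"
  by (simp add: res_layer_neurons_layer)

definition pick :: "real list \<Rightarrow> nat option \<Rightarrow> real" where
  "pick X s = (case s of None \<Rightarrow> 0 | Some j \<Rightarrow> X ! j)"

text \<open>Copying coordinates is a residual layer: each input \<open>x\<^sub>k\<close> passes through the two neurons
  \<open>relu x\<^sub>k\<close> and \<open>relu (- x\<^sub>k)\<close>, whose difference is \<open>x\<^sub>k\<close>.\<close>

definition select_coeff :: "nat option list \<Rightarrow> nat \<Rightarrow> nat \<Rightarrow> real" where
  "select_coeff S k i = (if S ! i = Some k then 1 else 0) - (if i = k then 1 else 0)"

definition select_layer :: "nat \<Rightarrow> nat option list \<Rightarrow> fcn_params" where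
  "select_layer d S = neurons_layer
     (concat (map (\<lambda>k. [(\<lambda>j. if j = k then 1 else 0, 0, select_coeff S k),
                       (\<lambda>j. if j = k then -1 else 0, 0, \<lambda>i. - select_coeff S k i)]) [0..<d]))
     (\<lambda>_. 0)"

lemma relu_minus_relu_uminus: "relu x - relu (- x) = x"
  by (simp add: relu_def max_def)

lemma res_layer_select_layer:
  assumes S: "length S = d" "\<And>j. Some j \<in> set S \<Longrightarrow> j < d" and X: "length X = d"
  shows "res_layer d (select_layer d S) X = map (pick X) S"
proof -
  let ?us = "\<lambda>k. [(\<lambda>j. if j = k then 1 else 0, 0, select_coeff S k),
                  (\<lambda>j. if j = k then -1 else (0::real), 0::real, \<lambda>i. - select_coeff S k i)]"
  have len: "length (concat (map ?us [0..<d])) \<le> 4 * d"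
    by (simp add: length_concat comp_def sum_list_triv)
  have unit_vector: "(\<Sum>j<d. (if j = k then c else 0) * X ! j) = c * X ! k" if "k < d" for k c
    using that by (simp add: if_distrib[of "\<lambda>a. a * _"] cong: if_cong)
  have pair: "(\<Sum>u\<leftarrow>?us k. neuron_out d X u i) = select_coeff S k i * X ! k" if "k < d" for k i
    using unit_vector[OF that, of 1] unit_vector[OF that, of "-1"] relu_minus_relu_uminus[of "X ! k"]
    by (simp add: algebra_simps)
  have "(\<Sum>u\<leftarrow>concat (map ?us [0..<d]). neuron_out d X u i) = pick X (S ! i) - X ! i"
    if i: "i < d" for i
  proof -
    have "(\<Sum>u\<leftarrow>concat (map ?us [0..<d]). neuron_out d X u i)
        = (\<Sum>k<d. select_coeff S k i * X ! k)"
      using pair by (simp add: sum_list_concat map_concat comp_def interv_sum_list_conv_sum_set_nat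
          atLeast0LessThan del: neuron_out.simps)
    also have "\<dots> = (\<Sum>k<d. if S ! i = Some k then X ! k else 0) - X ! i"
    proof -
      have "select_coeff S k i * X ! k =
          (if S ! i = Some k then X ! k else 0) - (if i = k then X ! k else 0)" for k
        by (simp add: select_coeff_def)
      then show ?thesis
        using i by (simp add: sum_subtractf)
    qed
    also have "(\<Sum>k<d. if S ! i = Some k then X ! k else 0) = pick X (S ! i)"
      using S i nth_mem[of i S] by (cases "S ! i") (auto simp: pick_def)
    finally show ?thesis .
  qed
  then show ?thesis
    unfolding select_layer_def res_layer_neurons_layer[OF len X]
    by (intro nth_equalityI) (simp_all add: S(1))
qed

section \<open>Block layouts and parallel composition\<close>

locale block_layout =
  fixes ds :: "nat list"
begin

definition offset :: "nat \<Rightarrow> nat" where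
  "offset i = (\<Sum>t<i. ds ! t)"

definition block :: "nat \<Rightarrow> real list \<Rightarrow> real list" where
  "block i X = map (\<lambda>r. X ! (offset i + r)) [0..<ds ! i]"

definition in_block :: "nat \<Rightarrow> nat \<Rightarrow> bool" where
  "in_block i c \<longleftrightarrow> offset i \<le> c \<and> c < offset i + ds ! i"

lemma length_block [simp]: "length (block i X) = ds ! i"
  by (simp add: block_def)

lemma nth_block [simp]: "r < ds ! i \<Longrightarrow> block i X ! r = X ! (offset i + r)"
  by (simp add: block_def)

lemma offset_Suc: "offset (Suc i) = offset i + ds ! i"
  by (simp add: offset_def)

lemma offset_mono: "i \<le> j \<Longrightarrow> offset i \<le> offset j"
  unfolding offset_def by (rule sum_mono2) auto

lemma offset_length: "offset (length ds) = sum_list ds"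
  by (simp add: offset_def sum_list_sum_nth atLeast0LessThan)

lemma block_end_le: "i < length ds \<Longrightarrow> offset i + ds ! i \<le> sum_list ds"
  using offset_mono[of "Suc i" "length ds"] offset_Suc[of i] offset_length by simp

lemma in_block_bound: "i < length ds \<Longrightarrow> r < ds ! i \<Longrightarrow> offset i + r < sum_list ds"
  using block_end_le[of i] by simp

lemma in_block_offset_iff:
  assumes "i < length ds" "r < ds ! i"
  shows "in_block i' (offset i + r) \<longleftrightarrow> i' = i"
proof
  assume h: "in_block i' (offset i + r)"
  show "i' = i"
  proof (rule ccontr)
    assume "i' \<noteq> i"
    then consider "Suc i' \<le> i" | "Suc i \<le> i'" by linarith
    then show False
    proof cases
      case 1
      then have "offset (Suc i') \<le> offset i" by (rule offset_mono)
      then show False using h offset_Suc[of i'] by (simp add: in_block_def)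
    next
      case 2
      then have "offset (Suc i) \<le> offset i'" by (rule offset_mono)
      then show False using h offset_Suc[of i] assms(2) by (simp add: in_block_def)
    qed
  qed
qed (use assms in \<open>simp add: in_block_def\<close>)

lemma length_concat_blocks:
  "(\<And>t. t < m \<Longrightarrow> length (B t) = ds ! t) \<Longrightarrow> length (concat (map B [0..<m])) = offset m"
  by (simp add: length_concat offset_def interv_sum_list_conv_sum_set_nat atLeast0LessThan)

lemma nth_concat_blocks:
  assumes "\<And>t. t < m \<Longrightarrow> length (B t) = ds ! t" "i < m" "r < ds ! i"
  shows "concat (map B [0..<m]) ! (offset i + r) = B i ! r"
  using assms
proof (induction m)
  case (Suc m)
  have len: "length (concat (map B [0..<m])) = offset m"
    using Suc.prems(1) by (simp add: length_concat_blocks)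
  show ?case
  proof (cases "i < m")
    case True
    then have "offset i + r < offset m"
      using offset_mono[of "Suc i" m] offset_Suc[of i] Suc.prems(3) by simp
    then show ?thesis using Suc True len by (simp add: nth_append)
  next
    case False
    then have "i = m" using Suc.prems(2) by simp
    then show ?thesis using len by (simp add: nth_append)
  qed
qed simp

lemma block_pad_concat_blocks:
  assumes m: "m \<le> length ds" and B: "\<And>t. t < m \<Longrightarrow> length (B t) = ds ! t" and i: "i < m"
  shows "block i (pad (sum_list ds) (concat (map B [0..<m]))) = B i"
proof (rule nth_equalityI)
  fix r assume "r < length (block i (pad (sum_list ds) (concat (map B [0..<m]))))"
  then have r: "r < ds ! i" by simp
  have "offset i + r < offset m"
    using offset_mono[of "Suc i" m] offset_Suc[of i] i r by simp
  then show "block i (pad (sum_list ds) (concat (map B [0..<m]))) ! r = B i ! r"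
    using nth_concat_blocks[OF B i r] length_concat_blocks[of m B] B r by (simp add: pad_def nth_append)
qed (simp add: B i)

lemma block_concat_blocks:
  assumes "\<And>t. t < length ds \<Longrightarrow> length (B t) = ds ! t" "i < length ds"
  shows "block i (concat (map B [0..<length ds])) = B i"
  using assms nth_concat_blocks[of "length ds" B i] by (intro nth_equalityI) auto

lemma block_map_pick_concat:
  assumes "\<And>t. t < length ds \<Longrightarrow> length (Sel t) = ds ! t" "i < length ds"
  shows "block i (map (pick X) (concat (map Sel [0..<length ds]))) = map (pick X) (Sel i)"
proof -
  have "map (pick X) (concat (map Sel [0..<length ds])) = concat (map (\<lambda>t. map (pick X) (Sel t)) [0..<length ds])"
    by (simp add: map_concat comp_def)
  then show ?thesis using block_concat_blocks[of "\<lambda>t. map (pick X) (Sel t)"] assms by simp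
qed

lemma sum_in_block:
  assumes "i < length ds"
  shows "(\<Sum>j<sum_list ds. (if in_block i j then g (j - offset i) else 0) * (X ! j :: real))
       = (\<Sum>r<ds ! i. g r * X ! (offset i + r))"
proof -
  have sub: "{offset i..<offset i + ds ! i} \<subseteq> {..<sum_list ds}"
    using block_end_le[OF assms] by auto
  have "(\<Sum>j<sum_list ds. (if in_block i j then g (j - offset i) else 0) * X ! j)
      = (\<Sum>j\<in>{offset i..<offset i + ds ! i}. g (j - offset i) * X ! j)"
    using sub by (intro sum.mono_neutral_cong_right) (auto simp: in_block_def)
  also have "\<dots> = (\<Sum>r<ds ! i. g r * X ! (offset i + r))"
    using sum.shift_bounds_nat_ivl[of "\<lambda>j. g (j - offset i) * X ! j" 0 "offset i" "ds ! i"]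
    by (simp add: add.commute atLeast0LessThan)
  finally show ?thesis .
qed

fun block_neuron :: "nat \<Rightarrow> fcn_params \<Rightarrow> nat \<Rightarrow> neuron" where
  "block_neuron i (W1, B1, W2, B2) k =
     (\<lambda>j. if in_block i j then W1 k (j - offset i) else 0, B1 k,
      \<lambda>c. if in_block i c then W2 (c - offset i) k else 0)"

definition par_layer :: "(nat \<Rightarrow> fcn_params) \<Rightarrow> fcn_params" where
  "par_layer P = neurons_layer
     (concat (map (\<lambda>i. map (block_neuron i (P i)) [0..<4 * ds ! i]) [0..<length ds]))
     (\<lambda>c. \<Sum>i<length ds. if in_block i c then (case P i of (_, _, _, B2) \<Rightarrow> B2 (c - offset i)) else 0)"

lemma neuron_out_block_neuron_outside:
  "\<not> in_block i c \<Longrightarrow> neuron_out d X (block_neuron i p k) c = 0"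
  by (cases p) simp

lemma neuron_out_block_neuron:
  assumes "i < length ds" "r < ds ! i"
  shows "neuron_out (sum_list ds) X (block_neuron i (W1, B1, W2, B2) k) (offset i + r) =
           W2 r k * relu ((\<Sum>j<ds ! i. W1 k j * block i X ! j) + B1 k)"
  using assms sum_in_block[OF assms(1), of "W1 k" X] by (simp add: in_block_def)

lemma res_layer_par_layer:
  assumes X: "length X = sum_list ds" and i: "i < length ds"
  shows "block i (res_layer (sum_list ds) (par_layer P) X) = res_layer (ds ! i) (P i) (block i X)"
proof (rule nth_equalityI)
  fix r assume "r < length (block i (res_layer (sum_list ds) (par_layer P) X))"
  then have r: "r < ds ! i" by simp
  obtain W1 B1 W2 B2 where Pi: "P i = (W1, B1, W2, B2)" by (cases "P i")
  let ?d = "sum_list ds" and ?c = "offset i + r"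
  let ?us = "concat (map (\<lambda>i. map (block_neuron i (P i)) [0..<4 * ds ! i]) [0..<length ds])"
  have own: "in_block i' ?c \<longleftrightarrow> i' = i" for i' by (rule in_block_offset_iff[OF i r])
  have "length ?us = 4 * ?d"
    by (simp add: length_concat comp_def sum_list_sum_nth sum_distrib_left
        interv_sum_list_conv_sum_set_nat atLeast0LessThan)
  then have wide: "res_layer ?d (par_layer P) X ! ?c =
      X ! ?c + (\<Sum>u\<leftarrow>?us. neuron_out ?d X u ?c) +
      (\<Sum>i<length ds. if in_block i ?c then (case P i of (_, _, _, B2) \<Rightarrow> B2 (?c - offset i)) else 0)"
    using X in_block_bound[OF i r] unfolding par_layer_def by (intro nth_res_layer_neurons_layer) simp_all
  have "(\<Sum>u\<leftarrow>?us. neuron_out ?d X u ?c)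
      = (\<Sum>i'<length ds. \<Sum>k<4 * ds ! i'. neuron_out ?d X (block_neuron i' (P i') k) ?c)"
    by (simp add: sum_list_concat map_concat comp_def interv_sum_list_conv_sum_set_nat atLeast0LessThan
        del: neuron_out.simps)
  also have "\<dots> = (\<Sum>k<4 * ds ! i. neuron_out ?d X (block_neuron i (P i) k) ?c)"
    using i own neuron_out_block_neuron_outside
    by (subst sum.mono_neutral_right[where S = "{i}"]) auto
  also have "\<dots> = (\<Sum>k<4 * ds ! i. W2 r k * relu ((\<Sum>j<ds ! i. W1 k j * block i X ! j) + B1 k))"
    unfolding Pi using neuron_out_block_neuron[OF i r] by simp
  finally have neurons: "(\<Sum>u\<leftarrow>?us. neuron_out ?d X u ?c) = fcn (ds ! i) (P i) (block i X) ! r - B2 r"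
    using r by (simp add: Pi fcn_def)
  have bias: "(\<Sum>i'<length ds. if in_block i' ?c then (case P i' of (_, _, _, B2) \<Rightarrow> B2 (?c - offset i')) else 0)
      = B2 r"
    using own i by (subst sum.mono_neutral_right[where S = "{i}"]) (auto simp: Pi)
  show "block i (res_layer ?d (par_layer P) X) ! r = res_layer (ds ! i) (P i) (block i X) ! r"
    using wide neurons bias r by (simp add: res_layer_def)
qed simp

definition par_net :: "(nat \<Rightarrow> fcn_params list) \<Rightarrow> nat \<Rightarrow> fcn_params list" where
  "par_net pss L = map (\<lambda>j. par_layer (\<lambda>i. pss i ! j)) [0..<L]"

lemma length_par_net [simp]: "length (par_net pss L) = L"
  by (simp add: par_net_def)

lemma resmlp_apply_par_net:
  assumes X: "length X = sum_list ds" and i: "i < length ds" and len: "length (pss i) = L"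
  shows "block i (resmlp_apply (sum_list ds) (par_net pss L) X) = resmlp_apply (ds ! i) (pss i) (block i X)"
proof -
  have "block i (resmlp_apply (sum_list ds) (par_net pss m) X) =
      resmlp_apply (ds ! i) (take m (pss i)) (block i X)" if "m \<le> L" for m
    using that
  proof (induction m)
    case (Suc m)
    have "par_net pss (Suc m) = par_net pss m @ [par_layer (\<lambda>i. pss i ! m)]"
      by (simp add: par_net_def)
    moreover have "take (Suc m) (pss i) = take m (pss i) @ [pss i ! m]"
      using Suc.prems len by (simp add: take_Suc_conv_app_nth)
    ultimately show ?case
      using Suc res_layer_par_layer[OF length_resmlp_apply[OF X] i]
      by (simp add: resmlp_apply_append resmlp_apply_def)
  qed (simp add: resmlp_apply_def par_net_def)
  then show ?thesis using len by simp
qed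

end

section \<open>Levels in a finite acyclic graph\<close>

lemma is_path_singleton: "is_path E [v]"
  by (simp add: is_path_def)

lemma is_path_snoc:
  assumes "is_path E p" "(last p, v) \<in> E"
  shows "is_path E (p @ [v])"
  unfolding is_path_def
proof (intro conjI allI impI)
  fix i assume i: "Suc i < length (p @ [v])"
  show "((p @ [v]) ! i, (p @ [v]) ! Suc i) \<in> E"
  proof (cases "Suc i < length p")
    case True
    then show ?thesis using assms(1) by (simp add: is_path_def nth_append)
  next
    case False
    then have "i = length p - 1" "p \<noteq> []" using i by auto
    then show ?thesis using assms(2) by (simp add: nth_append last_conv_nth)
  qed
qed simp

lemma is_path_last_edge:
  assumes "is_path E p" "2 \<le> length p"
  shows "(p ! (length p - 2), last p) \<in> E"
proof -
  have "(p ! (length p - 2), p ! Suc (length p - 2)) \<in> E"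
    using assms by (simp add: is_path_def)
  moreover have "p \<noteq> []" using assms(1) by (simp add: is_path_def)
  ultimately show ?thesis using assms(2) by (simp add: last_conv_nth Suc_diff_Suc numeral_2_eq_2)
qed

lemma is_path_trancl:
  assumes "is_path E p" "i < j" "j < length p"
  shows "(p ! i, p ! j) \<in> E\<^sup>+"
  using assms(2,3)
proof (induction j)
  case (Suc j)
  have "(p ! j, p ! Suc j) \<in> E" using assms(1) Suc.prems(2) by (simp add: is_path_def)
  then show ?case
    using Suc by (cases "i = j") (auto intro: trancl_into_trancl)
qed simp

lemma distinct_path:
  assumes "acyclic E" "is_path E p"
  shows "distinct p"
  unfolding distinct_conv_nth
proof (intro allI impI notI)
  fix i j assume ij: "i < length p" "j < length p" "i \<noteq> j" and eq: "p ! i = p ! j"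
  have "(p ! min i j, p ! max i j) \<in> E\<^sup>+"
    using ij by (intro is_path_trancl[OF assms(2)]) auto
  then show False using assms(1) eq by (simp add: acyclic_def min_def max_def split: if_splits)
qed

lemma set_path_subset:
  assumes "E \<subseteq> V \<times> V" "is_path E p" "last p \<in> V"
  shows "set p \<subseteq> V"
proof
  fix x assume "x \<in> set p"
  then obtain i where i: "i < length p" "x = p ! i" by (auto simp: in_set_conv_nth)
  show "x \<in> V"
  proof (cases "Suc i < length p")
    case True
    then show ?thesis using assms(1,2) i by (auto simp: is_path_def)
  next
    case False
    then have "i = length p - 1" "p \<noteq> []" using i by auto
    then show ?thesis using assms(3) i by (simp add: last_conv_nth)
  qed
qed

definition level :: "('v \<times> 'v) set \<Rightarrow> 'v \<Rightarrow> nat" where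
  "level E v = Max {length p - 1 | p. is_path E p \<and> last p = v}"

locale finite_dag =
  fixes V :: "'v set" and E :: "('v \<times> 'v) set"
  assumes finite_vertices: "finite V" and edges_subset: "E \<subseteq> V \<times> V" and acyclic: "acyclic E"
begin

lemma length_path_le_card: "is_path E p \<Longrightarrow> last p \<in> V \<Longrightarrow> length p \<le> card V"
  using distinct_card[OF distinct_path[OF acyclic]] set_path_subset[OF edges_subset]
    card_mono[OF finite_vertices] by metis

lemma length_path_le: "is_path E p \<Longrightarrow> length p \<le> Suc (card V)"
proof (cases "2 \<le> length p")
  case True
  assume p: "is_path E p"
  then have "last p \<in> V" using is_path_last_edge[OF p True] edges_subset by auto
  then show ?thesis using length_path_le_card[OF p] by simp
qed simp

lemma finite_path_lengths: "finite {length p - 1 | p. is_path E p \<and> P p}"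
  by (rule finite_subset[of _ "{..card V}"]) (auto dest: length_path_le)

lemma level_ge: "is_path E p \<Longrightarrow> last p = v \<Longrightarrow> length p - 1 \<le> level E v"
  unfolding level_def by (rule Max_ge[OF finite_path_lengths]) auto

lemma level_witness: obtains p where "is_path E p" "last p = v" "level E v = length p - 1"
proof -
  have "level E v \<in> {length p - 1 | p. is_path E p \<and> last p = v}"
    unfolding level_def by (rule Max_in[OF finite_path_lengths]) (use is_path_singleton in force)
  then show ?thesis using that by auto
qed

lemma level_lt_card:
  assumes "v \<in> V" shows "level E v < card V"
proof -
  obtain p where p: "is_path E p" "last p = v" "level E v = length p - 1" by (rule level_witness)
  then have "length p \<le> card V" "p \<noteq> []" using assms length_path_le_card by (auto simp: is_path_def)
  then show ?thesis using p(3) by (cases p) auto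
qed

lemma level_edge: "(u, v) \<in> E \<Longrightarrow> level E u < level E v"
proof -
  assume uv: "(u, v) \<in> E"
  obtain p where p: "is_path E p" "last p = u" "level E u = length p - 1" by (rule level_witness)
  have "length (p @ [v]) - 1 \<le> level E v"
    using is_path_snoc[of E p v] p uv by (intro level_ge) auto
  then show ?thesis using p by (cases p) (auto simp: is_path_def)
qed

lemma level_le_depth: "level E v \<le> depth E"
  unfolding level_def depth_def
  by (rule Max_mono) (use is_path_singleton[of E v] finite_path_lengths[of "\<lambda>_. True"] in force)+

lemma level_eq_0_iff: "level E v = 0 \<longleftrightarrow> is_source E v"
proof
  assume "level E v = 0"
  then show "is_source E v" unfolding is_source_def using level_edge by (metis not_less_zero)
next
  assume src: "is_source E v"
  obtain p where p: "is_path E p" "last p = v" "level E v = length p - 1" by (rule level_witness)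
  then have "\<not> 2 \<le> length p" using is_path_last_edge[of E p] src by (auto simp: is_source_def)
  then show "level E v = 0" using p(3) by simp
qed

end

section \<open>Simulating a computation graph\<close>

lemma prod_enc_map: "prod_enc enc us (map g us) = concat (map (\<lambda>u. enc u (g u)) us)"
  by (induction us) (simp_all add: prod_enc_def)

lemma prod_dim_distinct: "distinct us \<Longrightarrow> prod_dim dm us = (\<Sum>u\<in>set us. dm u)"
  by (simp add: prod_dim_def sum_list_distinct_conv_sum_set)

lemma pad_length_eq: "length x = d \<Longrightarrow> pad d x = x"
  by (simp add: pad_def)

lemma length_pad: "length x \<le> d \<Longrightarrow> length (pad d x) = d"
  by (simp add: pad_def)

lemma eval_graph_source: "is_source E v \<Longrightarrow> eval_graph E ins f inp n v = inp v"
  by (cases n) simp_all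

locale graph_resmlp =
  fixes V :: "'v set" and E :: "('v \<times> 'v) set" and ins :: "'v \<Rightarrow> 'v list"
    and S :: "'v \<Rightarrow> 'a set" and enc :: "'v \<Rightarrow> 'a \<Rightarrow> real list" and dm :: "'v \<Rightarrow> nat"
    and f :: "'v \<Rightarrow> 'a list \<Rightarrow> 'a"
    and dd :: "'v \<Rightarrow> nat" and LL :: "'v \<Rightarrow> nat"
    and srcs snks :: "'v list"
  assumes graph: "comp_graph V E ins S enc dm f"
    and distinct_srcs: "distinct srcs" and set_srcs: "set srcs = {v\<in>V. is_source E v}"
    and distinct_snks: "distinct snks" and set_snks: "set snks = {v\<in>V. is_sink E v}"
    and representable_f: "\<And>v. v \<in> V \<Longrightarrow> \<not> is_source E v \<Longrightarrow>
               representable (dd v) (LL v) (prod_set S (ins v)) (prod_enc enc (ins v))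
                 (prod_dim dm (ins v)) (enc v) (dm v) (f v)"
    and dd_source: "\<And>v. v \<in> V \<Longrightarrow> is_source E v \<Longrightarrow> dd v = dm v"

sublocale graph_resmlp \<subseteq> finite_dag V E
  using graph by unfold_locales (simp_all add: comp_graph_def)

context graph_resmlp
begin

lemma ins_in_vertices: "v \<in> V \<Longrightarrow> u \<in> set (ins v) \<Longrightarrow> u \<in> V"
  and ins_edge: "v \<in> V \<Longrightarrow> u \<in> set (ins v) \<Longrightarrow> (u, v) \<in> E"
  using graph edges_subset by (auto simp: comp_graph_def)

lemma level_ins: "v \<in> V \<Longrightarrow> u \<in> set (ins v) \<Longrightarrow> level E u < level E v"
  by (rule level_edge[OF ins_edge])

lemma length_enc: "v \<in> V \<Longrightarrow> x \<in> S v \<Longrightarrow> length (enc v x) = dm v"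
  using graph by (simp add: comp_graph_def local_type_def)

lemma f_in_type: "v \<in> V \<Longrightarrow> \<not> is_source E v \<Longrightarrow> xs \<in> prod_set S (ins v) \<Longrightarrow> f v xs \<in> S v"
  using graph by (simp add: comp_graph_def)

lemma ins_source: "v \<in> V \<Longrightarrow> is_source E v \<Longrightarrow> ins v = []"
  using graph by (auto simp: comp_graph_def is_source_def)

lemma prod_dim_ins_le: "v \<in> V \<Longrightarrow> prod_dim dm (ins v) \<le> dd v"
  using representable_f[of v] ins_source[of v] by (cases "is_source E v") (auto simp: representable_def prod_dim_def)

lemma dm_le_dd: "v \<in> V \<Longrightarrow> dm v \<le> dd v"
  using representable_f[of v] dd_source[of v] by (cases "is_source E v") (auto simp: representable_def)

lemma prod_dim_le_width:
  "distinct us \<Longrightarrow> set us \<subseteq> V \<Longrightarrow> prod_dim dm us \<le> (\<Sum>v\<in>V. dd v)"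
  using sum_mono[of "set us" dm dd] dm_le_dd sum_mono2[OF finite_vertices, of "set us" dd]
  by (fastforce simp: prod_dim_distinct)

lemma eval_graph_stable:
  "v \<in> V \<Longrightarrow> level E v < k \<Longrightarrow> level E v < m \<Longrightarrow>
     eval_graph E ins f inp k v = eval_graph E ins f inp m v"
proof (induction k arbitrary: v m)
  case (Suc k)
  obtain m' where m: "m = Suc m'" using Suc.prems(3) by (cases m) auto
  have "map (eval_graph E ins f inp k) (ins v) = map (eval_graph E ins f inp m') (ins v)"
  proof (rule map_cong[OF refl])
    fix u assume u: "u \<in> set (ins v)"
    have "level E u < k" "level E u < m'" using level_ins[OF Suc.prems(1) u] Suc.prems m by auto
    then show "eval_graph E ins f inp k u = eval_graph E ins f inp m' u"
      using Suc.IH ins_in_vertices[OF Suc.prems(1) u] by blast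
  qed
  then show ?case by (simp add: m del: map_eq_conv)
qed simp

definition node_val :: "'a list \<Rightarrow> 'v \<Rightarrow> 'a" where
  "node_val xs = eval_graph E ins f (\<lambda>v. the (map_of (zip srcs xs) v)) (card V)"

lemma node_val_step:
  assumes v: "v \<in> V" "\<not> is_source E v"
  shows "node_val xs v = f v (map (node_val xs) (ins v))"
proof -
  let ?eval = "eval_graph E ins f (\<lambda>v. the (map_of (zip srcs xs) v))"
  obtain c where c: "card V = Suc c" using level_lt_card[OF v(1)] by (cases "card V") auto
  have "node_val xs v = ?eval (Suc c) v" by (simp only: node_val_def c)
  also have "\<dots> = f v (map (?eval c) (ins v))" using v(2) by simp
  also have "map (?eval c) (ins v) = map (node_val xs) (ins v)"
  proof (rule map_cong[OF refl])
    fix u assume u: "u \<in> set (ins v)"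
    have "level E u < c" "level E u < card V"
      using level_ins[OF v(1) u] level_lt_card[OF v(1)] c by simp_all
    then show "?eval c u = node_val xs u"
      unfolding node_val_def by (rule eval_graph_stable[OF ins_in_vertices[OF v(1) u]])
  qed
  finally show ?thesis .
qed

lemma node_val_srcs:
  "length xs = length srcs \<Longrightarrow> i < length srcs \<Longrightarrow> node_val xs (srcs ! i) = xs ! i"
  using set_srcs nth_mem[of i srcs] map_of_zip_nth[of srcs xs i] distinct_srcs
  by (simp add: node_val_def eval_graph_source)

lemma map_node_val_srcs: "length xs = length srcs \<Longrightarrow> map (node_val xs) srcs = xs"
  by (simp add: list_eq_iff_nth_eq node_val_srcs)

lemma node_val_in_type:
  assumes xs: "xs \<in> prod_set S srcs"
  shows "v \<in> V \<Longrightarrow> node_val xs v \<in> S v"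
proof (induction "level E v" arbitrary: v rule: less_induct)
  case less
  show ?case
  proof (cases "is_source E v")
    case True
    then have "v \<in> set srcs" using set_srcs less.prems by simp
    then obtain i where "i < length srcs" "v = srcs ! i" by (auto simp: in_set_conv_nth)
    then show ?thesis using xs node_val_srcs by (simp add: prod_set_def)
  next
    case False
    have "node_val xs u \<in> S u" if "u \<in> set (ins v)" for u
      using less.hyps level_ins ins_in_vertices less.prems that by blast
    then have "map (node_val xs) (ins v) \<in> prod_set S (ins v)"
      by (simp add: prod_set_def)
    then show ?thesis
      using f_in_type[OF less.prems False] node_val_step[OF less.prems False] by simp
  qed
qed

text \<open>Sources come first, so that the padded input already holds their encodings in their blocks.\<close>

definition vertices :: "'v list" where
  "vertices = srcs @ (SOME rest. distinct rest \<and> set rest = V - set srcs)"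

lemma distinct_vertices: "distinct vertices" and set_vertices: "set vertices = V"
proof -
  have "\<exists>rest. distinct rest \<and> set rest = V - set srcs"
    using finite_distinct_list[of "V - set srcs"] finite_vertices by blast
  then have "distinct (SOME rest. distinct rest \<and> set rest = V - set srcs) \<and>
      set (SOME rest. distinct rest \<and> set rest = V - set srcs) = V - set srcs"
    by (rule someI_ex)
  then show "distinct vertices" "set vertices = V"
    using distinct_srcs set_srcs by (auto simp: vertices_def)
qed

lemma nth_vertices: "i < length vertices \<Longrightarrow> vertices ! i \<in> V"
  using set_vertices nth_mem by blast

lemma nth_vertices_srcs: "i < length srcs \<Longrightarrow> vertices ! i = srcs ! i"
  by (simp add: vertices_def nth_append)

sublocale block_layout "map dd vertices" .

abbreviation width :: nat where
  "width \<equiv> sum_list (map dd vertices)"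

lemma width_eq: "width = (\<Sum>v\<in>V. dd v)"
  using distinct_vertices set_vertices by (simp add: sum_list_distinct_conv_sum_set)

definition pos :: "'v \<Rightarrow> nat" where
  "pos u = (THE i. i < length vertices \<and> vertices ! i = u)"

lemma pos_less: "u \<in> V \<Longrightarrow> pos u < length vertices"
  and nth_pos: "u \<in> V \<Longrightarrow> vertices ! pos u = u"
proof -
  assume "u \<in> V"
  obtain i where i: "i < length vertices" "vertices ! i = u"
    using \<open>u \<in> V\<close> set_vertices in_set_conv_nth[of u vertices] by blast
  have "pos u = i"
    unfolding pos_def using i distinct_vertices by (auto simp: nth_eq_iff_index_eq)
  then show "pos u < length vertices" "vertices ! pos u = u" using i by simp_all
qed

lemma dd_pos: "u \<in> V \<Longrightarrow> map dd vertices ! pos u = dd u"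
  using pos_less[of u] nth_pos[of u] by simp

definition gather :: "'v list \<Rightarrow> nat option list" where
  "gather us = concat (map (\<lambda>u. map (\<lambda>r. Some (offset (pos u) + r)) [0..<dm u]) us)"

lemma length_gather: "length (gather us) = prod_dim dm us"
  by (induction us) (simp_all add: gather_def prod_dim_def)

lemma gather_bound: "set us \<subseteq> V \<Longrightarrow> Some j \<in> set (gather us) \<Longrightarrow> j < width"
  using pos_less dm_le_dd in_block_bound dd_pos by (fastforce simp: gather_def)

definition encodes :: "nat \<Rightarrow> 'a list \<Rightarrow> real list \<Rightarrow> bool" where
  "encodes l xs X \<longleftrightarrow> length X = width \<and>
     (\<forall>i<length vertices. level E (vertices ! i) \<le> l \<longrightarrow>
        block i X = pad (dd (vertices ! i)) (enc (vertices ! i) (node_val xs (vertices ! i))))"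

lemma length_encodes: "encodes l xs X \<Longrightarrow> length X = width"
  by (simp add: encodes_def)

lemma map_pick_gather:
  assumes xs: "xs \<in> prod_set S srcs" and us: "set us \<subseteq> V"
    and blocks: "\<And>u. u \<in> set us \<Longrightarrow> block (pos u) X = pad (dd u) (enc u (node_val xs u))"
  shows "map (pick X) (gather us) = prod_enc enc us (map (node_val xs) us)"
  unfolding gather_def prod_enc_map map_concat map_map o_def
proof (intro arg_cong[where f = concat] map_cong refl)
  fix u assume u: "u \<in> set us"
  then have uV: "u \<in> V" using us by blast
  have len: "length (enc u (node_val xs u)) = dm u"
    using length_enc[OF uV node_val_in_type[OF xs uV]] .
  show "map (\<lambda>r. pick X (Some (offset (pos u) + r))) [0..<dm u] = enc u (node_val xs u)"
  proof (rule nth_equalityI)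
    fix r assume "r < length (map (\<lambda>r. pick X (Some (offset (pos u) + r))) [0..<dm u])"
    then have r: "r < dm u" by simp
    then have "X ! (offset (pos u) + r) = block (pos u) X ! r"
      using dm_le_dd[OF uV] dd_pos[OF uV] by simp
    also have "\<dots> = enc u (node_val xs u) ! r"
      using blocks[OF u] r len by (simp add: pad_def nth_append)
    finally show "map (\<lambda>r. pick X (Some (offset (pos u) + r))) [0..<dm u] ! r = enc u (node_val xs u) ! r"
      using r by (simp add: pick_def)
  qed (simp add: len)
qed

lemma length_prod_enc_node_val:
  assumes "xs \<in> prod_set S srcs" "set us \<subseteq> V"
  shows "length (prod_enc enc us (map (node_val xs) us)) = prod_dim dm us"
  unfolding prod_enc_map using assms
  by (induction us) (auto simp: prod_dim_def length_enc node_val_in_type)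

definition stage_sel :: "nat \<Rightarrow> nat \<Rightarrow> nat option list" where
  "stage_sel l i =
     (if level E (vertices ! i) = l
      then gather (ins (vertices ! i)) @
        replicate (dd (vertices ! i) - prod_dim dm (ins (vertices ! i))) None
      else map (\<lambda>r. Some (offset i + r)) [0..<dd (vertices ! i)])"

definition stage_sels :: "nat \<Rightarrow> nat option list" where
  "stage_sels l = concat (map (stage_sel l) [0..<length vertices])"

lemma length_stage_sel: "i < length vertices \<Longrightarrow> length (stage_sel l i) = map dd vertices ! i"
  using prod_dim_ins_le[OF nth_vertices] by (simp add: stage_sel_def length_gather)

lemma length_stage_sels: "length (stage_sels l) = width"
  unfolding stage_sels_def using length_concat_blocks[of "length vertices" "stage_sel l"]
    length_stage_sel offset_length by simp

lemma stage_sels_bound: "Some j \<in> set (stage_sels l) \<Longrightarrow> j < width"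
  using gather_bound[OF subsetI[OF ins_in_vertices[OF nth_vertices]]] in_block_bound
  by (fastforce simp: stage_sels_def stage_sel_def split: if_splits)

lemma block_select_stage:
  assumes xs: "xs \<in> prod_set S srcs" and X: "encodes (l - 1) xs X" and i: "i < length vertices"
  shows "block i (res_layer width (select_layer width (stage_sels l)) X) =
    (if level E (vertices ! i) = l
     then pad (dd (vertices ! i)) (prod_enc enc (ins (vertices ! i)) (map (node_val xs) (ins (vertices ! i))))
     else block i X)"
proof -
  let ?v = "vertices ! i"
  have "res_layer width (select_layer width (stage_sels l)) X = map (pick X) (stage_sels l)"
    using res_layer_select_layer[OF length_stage_sels stage_sels_bound length_encodes[OF X]] .
  then have "block i (res_layer width (select_layer width (stage_sels l)) X) = map (pick X) (stage_sel l i)"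
    using block_map_pick_concat[of "stage_sel l" i X] length_stage_sel i by (simp add: stage_sels_def)
  also have "\<dots> = (if level E ?v = l
     then pad (dd ?v) (prod_enc enc (ins ?v) (map (node_val xs) (ins ?v))) else block i X)"
  proof (cases "level E ?v = l")
    case True
    have v: "?v \<in> V" by (rule nth_vertices[OF i])
    have insV: "set (ins ?v) \<subseteq> V" using ins_in_vertices[OF v] by blast
    have "block (pos u) X = pad (dd u) (enc u (node_val xs u))" if u: "u \<in> set (ins ?v)" for u
    proof -
      have uV: "u \<in> V" by (rule ins_in_vertices[OF v u])
      have "level E u \<le> l - 1" using level_ins[OF v u] True by simp
      then show ?thesis using X pos_less[OF uV] nth_pos[OF uV] by (auto simp: encodes_def)
    qed
    then have "map (pick X) (gather (ins ?v)) = prod_enc enc (ins ?v) (map (node_val xs) (ins ?v))"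
      using map_pick_gather[OF xs insV] by blast
    then show ?thesis
      using True length_prod_enc_node_val[OF xs insV]
      by (auto simp: stage_sel_def pad_def pick_def)
  next
    case False
    then show ?thesis using i by (simp add: stage_sel_def block_def pick_def comp_def)
  qed
  finally show ?thesis .
qed

definition net :: "'v \<Rightarrow> fcn_params list" where
  "net v = (SOME ps. length ps = LL v \<and> (\<forall>x\<in>prod_set S (ins v).
     pad (dd v) (enc v (f v x)) = resmlp_apply (dd v) ps (pad (dd v) (prod_enc enc (ins v) x))))"

lemma net:
  assumes "v \<in> V" "\<not> is_source E v"
  shows "length (net v) = LL v"
    and "x \<in> prod_set S (ins v) \<Longrightarrow>
      resmlp_apply (dd v) (net v) (pad (dd v) (prod_enc enc (ins v) x)) = pad (dd v) (enc v (f v x))"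
proof -
  have "\<exists>ps. length ps = LL v \<and> (\<forall>x\<in>prod_set S (ins v).
      pad (dd v) (enc v (f v x)) = resmlp_apply (dd v) ps (pad (dd v) (prod_enc enc (ins v) x)))"
    using representable_f[OF assms] by (auto simp: representable_def ResMLP_def)
  from someI_ex[OF this] show "length (net v) = LL v"
    and "x \<in> prod_set S (ins v) \<Longrightarrow>
      resmlp_apply (dd v) (net v) (pad (dd v) (prod_enc enc (ins v) x)) = pad (dd v) (enc v (f v x))"
    unfolding net_def by auto
qed

definition max_layers :: nat where
  "max_layers = Max (insert 0 (LL ` V))"

lemma LL_le_max_layers: "v \<in> V \<Longrightarrow> LL v \<le> max_layers"
  unfolding max_layers_def using finite_vertices by (intro Max_ge) auto

definition stage_nets :: "nat \<Rightarrow> nat \<Rightarrow> fcn_params list" where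
  "stage_nets l i =
     (if level E (vertices ! i) = l
      then net (vertices ! i) @ replicate (max_layers - LL (vertices ! i)) zero_fcn
      else replicate max_layers zero_fcn)"

definition stage :: "nat \<Rightarrow> fcn_params list" where
  "stage l = select_layer width (stage_sels l) # par_net (stage_nets l) max_layers"

lemma length_stage: "length (stage l) = max_layers + 1"
  by (simp add: stage_def)

lemma encodes_stage:
  assumes xs: "xs \<in> prod_set S srcs" and l: "1 \<le> l" and X: "encodes (l - 1) xs X"
  shows "encodes l xs (resmlp_apply width (stage l) X)"
  unfolding encodes_def
proof (intro conjI allI impI)
  let ?Y = "res_layer width (select_layer width (stage_sels l)) X"
  have Z: "resmlp_apply width (stage l) X = resmlp_apply width (par_net (stage_nets l) max_layers) ?Y"
    by (simp add: stage_def resmlp_apply_def)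
  then show "length (resmlp_apply width (stage l) X) = width"
    by (simp add: length_resmlp_apply)
  fix i assume i: "i < length vertices" and le: "level E (vertices ! i) \<le> l"
  let ?v = "vertices ! i"
  have v: "?v \<in> V" by (rule nth_vertices[OF i])
  show "block i (resmlp_apply width (stage l) X) = pad (dd ?v) (enc ?v (node_val xs ?v))"
  proof (cases "level E ?v = l")
    case True
    then have src: "\<not> is_source E ?v" using l level_eq_0_iff[of ?v] by simp
    have len: "length (stage_nets l i) = max_layers"
      using True net(1)[OF v src] LL_le_max_layers[OF v] by (simp add: stage_nets_def)
    have ins: "map (node_val xs) (ins ?v) \<in> prod_set S (ins ?v)"
      using node_val_in_type[OF xs] ins_in_vertices[OF v] by (simp add: prod_set_def)
    have "block i (resmlp_apply width (stage l) X) =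
        resmlp_apply (dd ?v) (stage_nets l i) (pad (dd ?v) (prod_enc enc (ins ?v) (map (node_val xs) (ins ?v))))"
      using Z resmlp_apply_par_net[of ?Y i "stage_nets l", OF _ _ len] block_select_stage[OF xs X i] True i by simp
    also have "\<dots> = pad (dd ?v) (enc ?v (node_val xs ?v))"
      using True net(2)[OF v src ins] node_val_step[OF v src] resmlp_apply_zero_fcns length_pad
        length_enc[OF v node_val_in_type[OF xs v]] dm_le_dd[OF v]
      by (simp add: stage_nets_def resmlp_apply_append)
    finally show ?thesis .
  next
    case False
    have len: "length (stage_nets l i) = max_layers" using False by (simp add: stage_nets_def)
    have "block i (resmlp_apply width (stage l) X) = block i X"
      using Z resmlp_apply_par_net[of ?Y i "stage_nets l", OF _ _ len] block_select_stage[OF xs X i] False i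
        resmlp_apply_zero_fcns by (simp add: stage_nets_def)
    also have "\<dots> = pad (dd ?v) (enc ?v (node_val xs ?v))"
      using X i le False by (simp add: encodes_def)
    finally show ?thesis .
  qed
qed

lemma source_index:
  assumes i: "i < length vertices" and src: "is_source E (vertices ! i)"
  shows "i < length srcs"
proof -
  have "vertices ! i \<in> set srcs" using set_srcs nth_vertices[OF i] src by simp
  then obtain k where k: "k < length srcs" "srcs ! k = vertices ! i" by (auto simp: in_set_conv_nth)
  then have "vertices ! k = vertices ! i" using nth_vertices_srcs by simp
  moreover have "k < length vertices" using k(1) by (simp add: vertices_def)
  ultimately show ?thesis using k(1) i distinct_vertices by (simp add: nth_eq_iff_index_eq)
qed

lemma encodes_input:
  assumes xs: "xs \<in> prod_set S srcs"
  shows "encodes 0 xs (pad width (prod_enc enc srcs xs))"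
proof -
  let ?B = "\<lambda>t. enc (srcs ! t) (node_val xs (srcs ! t))"
  have srcs_le: "length srcs \<le> length vertices" by (simp add: vertices_def)
  have lenB: "length (?B t) = map dd vertices ! t" if t: "t < length srcs" for t
  proof -
    have "srcs ! t \<in> V" "is_source E (srcs ! t)" using set_srcs nth_mem[OF t] by auto
    then show ?thesis
      using t srcs_le nth_vertices_srcs[OF t] dd_source length_enc node_val_in_type[OF xs] by simp
  qed
  have C: "prod_enc enc srcs xs = concat (map ?B [0..<length srcs])"
  proof -
    have "map (\<lambda>u. enc u (node_val xs u)) srcs = map ?B [0..<length srcs]"
      by (rule nth_equalityI) simp_all
    moreover have "length xs = length srcs" using xs by (simp add: prod_set_def)
    ultimately show ?thesis using map_node_val_srcs prod_enc_map[of enc srcs "node_val xs"] by simp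
  qed
  have "length (prod_enc enc srcs xs) \<le> width"
    unfolding C using length_concat_blocks[of "length srcs" ?B] lenB offset_mono[OF srcs_le] offset_length
    by simp
  moreover have "block i (pad width (prod_enc enc srcs xs)) =
      pad (dd (vertices ! i)) (enc (vertices ! i) (node_val xs (vertices ! i)))"
    if i: "i < length vertices" and lev: "level E (vertices ! i) \<le> 0" for i
  proof -
    have i_src: "i < length srcs" using source_index[OF i] level_eq_0_iff lev by simp
    then show ?thesis
      unfolding C using block_pad_concat_blocks[of "length srcs" ?B i] srcs_le lenB i_src
        nth_vertices_srcs[OF i_src] i by (simp add: pad_length_eq)
  qed
  ultimately show ?thesis by (simp add: encodes_def length_pad)
qed

lemma encodes_stages:
  assumes xs: "xs \<in> prod_set S srcs"
  shows "encodes l xs (resmlp_apply width (concat (map stage [1..<Suc l])) (pad width (prod_enc enc srcs xs)))"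
proof (induction l)
  case 0
  then show ?case using encodes_input[OF xs] by (simp add: resmlp_apply_def)
next
  case (Suc l)
  then show ?case using encodes_stage[OF xs, of "Suc l"] by (simp add: resmlp_apply_append)
qed

definition output_sel :: "nat option list" where
  "output_sel = gather snks @ replicate (width - prod_dim dm snks) None"

definition network :: "fcn_params list" where
  "network = concat (map stage [1..<Suc (depth E)]) @ [select_layer width output_sel]"

lemma length_network: "length network = depth E * (max_layers + 1) + 1"
  by (simp add: network_def length_concat comp_def length_stage sum_list_triv)

lemma prod_dim_snks_le: "prod_dim dm snks \<le> width"
  using prod_dim_le_width[OF distinct_snks] set_snks width_eq by auto

lemma prod_dim_srcs_le: "prod_dim dm srcs \<le> width"
  using prod_dim_le_width[OF distinct_srcs] set_srcs width_eq by auto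

lemma network_correct:
  assumes xs: "xs \<in> prod_set S srcs"
  shows "resmlp_apply width network (pad width (prod_enc enc srcs xs)) =
    pad width (prod_enc enc snks (induced V E ins f srcs snks xs))"
proof -
  define X where "X = resmlp_apply width (concat (map stage [1..<Suc (depth E)])) (pad width (prod_enc enc srcs xs))"
  have X_enc: "encodes (depth E) xs X" unfolding X_def by (rule encodes_stages[OF xs])
  have snksV: "set snks \<subseteq> V" using set_snks by auto
  have "resmlp_apply width network (pad width (prod_enc enc srcs xs)) = res_layer width (select_layer width output_sel) X"
    by (simp add: network_def X_def resmlp_apply_append resmlp_apply_def)
  also have "\<dots> = map (pick X) output_sel"
    using prod_dim_snks_le gather_bound[OF snksV] length_encodes[OF X_enc]
    by (intro res_layer_select_layer) (auto simp: output_sel_def length_gather)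
  also have "\<dots> = pad width (prod_enc enc snks (map (node_val xs) snks))"
  proof -
    have "block (pos u) X = pad (dd u) (enc u (node_val xs u))" if "u \<in> set snks" for u
      using X_enc pos_less[of u] nth_pos[of u] level_le_depth[of u] that snksV by (auto simp: encodes_def)
    then have "map (pick X) (gather snks) = prod_enc enc snks (map (node_val xs) snks)"
      by (rule map_pick_gather[OF xs snksV])
    then show ?thesis
      using length_prod_enc_node_val[OF xs snksV] by (simp add: output_sel_def pad_def pick_def)
  qed
  also have "map (node_val xs) snks = induced V E ins f srcs snks xs"
    by (simp add: induced_def node_val_def)
  finally show ?thesis .
qed

end

theorem proposition12:
  fixes V :: "'v set" and E :: "('v \<times> 'v) set" and ins :: "'v \<Rightarrow> 'v list"
    and S :: "'v \<Rightarrow> 'a set" and enc :: "'v \<Rightarrow> 'a \<Rightarrow> real list" and dm :: "'v \<Rightarrow> nat"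
    and f :: "'v \<Rightarrow> 'a list \<Rightarrow> 'a"
    and dd :: "'v \<Rightarrow> nat" and LL :: "'v \<Rightarrow> nat"
    and srcs snks :: "'v list"
  assumes G: "comp_graph V E ins S enc dm f"
    and srcs: "distinct srcs" "set srcs = {v\<in>V. is_source E v}"
    and snks: "distinct snks" "set snks = {v\<in>V. is_sink E v}"
    and rep: "\<forall>v\<in>V. \<not> is_source E v \<longrightarrow>
               representable (dd v) (LL v) (prod_set S (ins v)) (prod_enc enc (ins v))
                 (prod_dim dm (ins v)) (enc v) (dm v) (f v)"
    and src_d: "\<forall>v\<in>V. is_source E v \<longrightarrow> dd v = dm v \<and> LL v = 0"
  shows "representable (\<Sum>v\<in>V. dd v) (depth E * (Max (insert 0 (LL ` V)) + 1) + 1)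
           (prod_set S srcs) (prod_enc enc srcs) (prod_dim dm srcs)
           (prod_enc enc snks) (prod_dim dm snks) (induced V E ins f srcs snks)"
proof -
  interpret graph_resmlp V E ins S enc dm f dd LL srcs snks
    using assms by unfold_locales auto
  have "max (prod_dim dm srcs) (prod_dim dm snks) \<le> width"
    using prod_dim_srcs_le prod_dim_snks_le by simp
  moreover have "resmlp_apply width network \<in> ResMLP width (depth E * (max_layers + 1) + 1)"
    using length_network by (auto simp: ResMLP_def)
  moreover have "\<forall>xs\<in>prod_set S srcs. pad width (prod_enc enc snks (induced V E ins f srcs snks xs)) =
      resmlp_apply width network (pad width (prod_enc enc srcs xs))"
    using network_correct by simp
  ultimately show ?thesis
    unfolding representable_def width_eq[symmetric] max_layers_def by blast
qed

end
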